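(* Let $n_b\ge1$, $\alpha>0$, $l_0>0$, $\gamma\in[0,1)$ and $p_{in},p_{out}\in[0,1]$ satisfy either ($p_{in}>p_{out}$ and $1-p_{in}>p_{out}$) or ($p_{out}>p_{in}$ and $1-p_{out}>p_{in}$). Consider a random network on $2n_b$ nodes split into blocks $\mathcal B_1,\mathcal B_2$ of size $n_b$, with $\mathbf W=\alpha\mathbf A$, where $\mathbf A$ is a symmetric $0/1$ matrix whose entries $A_{ij}$, $i\le j$ (diagonal included), are independent Bernoulli with parameter $p_{in}$ if $v_i,v_j$ are in the same block and $p_{out}$ otherwise. Run the GIP model with $l_{j,0}=h_{j,0}=l_0$ and $l_{j,1}=2\alpha l_0$ for all $v_j$, from the initial state $x_i(0)=l_0$ for $v_i\in\mathcal A_0$ and $0$ otherwise. Consider (i) $\mathcal A_0=\{v_{i_1},v_{i_2},v_{i_3},v_{i_4}\}\subset\mathcal B_1$ and (ii) $\mathcal A_0=\{v_{j_1},v_{j_2},v_{j_3},v_{j_4}\}$ with $v_{j_1},v_{j_2}\in\mathcal B_1$, $v_{j_3},v_{j_4}\in\mathcal B_2$. For each choice, let $\Delta$ be the increase of $\mathbb E[\sum_j(1-\gamma)x_j(1)]$ (expectation over the random network) when $h_{j,1}$ is raised from $h_{j,1}=2\alpha l_0$ to $h_{j,1}=4\alpha l_0$ for all $v_j$. Then $\Delta$ for (i) is strictly larger than $\Delta$ for (ii).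
   Context: The general information propagation (GIP) model on a network with weighted adjacency matrix $\mathbf W=(W_{ij})$, $W_{ij}\ge0$, with lower bounds $\{l_{j,t}\}$ and upper bounds $\{h_{j,t}\}$ ($0\le l_{j,t}\le h_{j,t}$, $l_{j,0}>0$) is the dynamics $x_j(t)=f_{j,t}(\sum_i W_{ij}x_i(t-1))$ for $t>0$, where $f_{j,t}(x)=0$ if $x<l_{j,t}$, $f_{j,t}(x)=x$ if $l_{j,t}\le x<h_{j,t}$, $f_{j,t}(x)=h_{j,t}$ if $x\ge h_{j,t}$, and initial values $x_j(0)\in\{0\}\cup[l_{j,0},h_{j,0}]$. *)

theory Defs
  imports "HOL-Probability.Probability"
begin

definition gip_f :: "real \<Rightarrow> real \<Rightarrow> real \<Rightarrow> real" where
  "gip_f l h x = (if x < l then 0 else if x < h then x else h)"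

text \<open>GIP dynamics on nodes 0..N-1: W i j is the weight W_ij, l j t and h j t are the
  lower/upper bounds l_{j,t}, h_{j,t}, x0 is the initial state; gip ... t j = x_j(t).\<close>
fun gip :: "nat \<Rightarrow> (nat \<Rightarrow> nat \<Rightarrow> real) \<Rightarrow> (nat \<Rightarrow> nat \<Rightarrow> real) \<Rightarrow> (nat \<Rightarrow> nat \<Rightarrow> real)
            \<Rightarrow> (nat \<Rightarrow> real) \<Rightarrow> nat \<Rightarrow> nat \<Rightarrow> real" where
  "gip N W l h x0 0 = x0"
| "gip N W l h x0 (Suc t) =
     (\<lambda>j. gip_f (l j (Suc t)) (h j (Suc t)) (\<Sum>i<N. W i j * gip N W l h x0 t i))"

text \<open>Two blocks: B1 = {0..<nb}, B2 = {nb..<2nb}.\<close>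
definition same_block :: "nat \<Rightarrow> nat \<Rightarrow> nat \<Rightarrow> bool" where
  "same_block nb i j = ((i < nb) = (j < nb))"

definition sbm :: "nat \<Rightarrow> real \<Rightarrow> real \<Rightarrow> (nat \<times> nat \<Rightarrow> bool) pmf" where
  "sbm nb pin pout = Pi_pmf {(i, j). i \<le> j \<and> j < 2 * nb} False
     (\<lambda>(i, j). bernoulli_pmf (if same_block nb i j then pin else pout))"

definition adj :: "(nat \<times> nat \<Rightarrow> bool) \<Rightarrow> nat \<Rightarrow> nat \<Rightarrow> real" where
  "adj E i j = (if E (min i j, max i j) then 1 else 0)"

text \<open>Expected value of sum_j (1-gamma) x_j(1), with W = alpha A, l_{j,0}=h_{j,0}=l0,
  l_{j,1} = 2 alpha l0, h_{j,1} = H, initial state l0 on A0 and 0 elsewhere.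
  (Bounds for t \<ge> 2 are irrelevant for x(1); they are set equal to those at t = 1.)\<close>
definition exp_activity ::
  "nat \<Rightarrow> real \<Rightarrow> real \<Rightarrow> real \<Rightarrow> real \<Rightarrow> real \<Rightarrow> real \<Rightarrow> nat set \<Rightarrow> real" where
  "exp_activity nb pin pout \<alpha> l0 \<gamma> H A0 =
     measure_pmf.expectation (sbm nb pin pout)
       (\<lambda>E. \<Sum>j<2 * nb. (1 - \<gamma>) *
          gip (2 * nb) (\<lambda>i j. \<alpha> * adj E i j)
              (\<lambda>j t. if t = 0 then l0 else 2 * \<alpha> * l0)
              (\<lambda>j t. if t = 0 then l0 else H)
              (\<lambda>i. if i \<in> A0 then l0 else 0) 1 j)"

definition gip_delta ::
  "nat \<Rightarrow> real \<Rightarrow> real \<Rightarrow> real \<Rightarrow> real \<Rightarrow> real \<Rightarrow> nat set \<Rightarrow> real" where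
  "gip_delta nb pin pout \<alpha> l0 \<gamma> A0 =
     exp_activity nb pin pout \<alpha> l0 \<gamma> (4 * \<alpha> * l0) A0
     - exp_activity nb pin pout \<alpha> l0 \<gamma> (2 * \<alpha> * l0) A0"

end

theory Submission imports Defs begin

text \<open>With W = alpha A and all seeds at level l0, node j receives c k at time 1, where c = alpha l0
  and k is the number of seeds adjacent to j. Raising the cap from 2c to 4c gains
  c g(k) with g(k) = min k 4 - min k 2, a convex function of k on {0..4}. The neighbour count of j is a sum of two
  independent binomials Bin(m, p_in) + Bin(n, p_out) for m seeds in the block of j and n in the other.
  Summing over both blocks, four seeds in one block give nb c (E g(Bin(4,p_in)) + E g(Bin(4,p_out))),
  a 2+2 split gives 2 nb c E g(Bin(2,p_in) + Bin(2,p_out)), and the difference is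
  2 nb c (p_in - p_out)^2 (p_in + p_out) (2 - p_in - p_out) > 0.\<close>

lemma expectation_Pi_bernoulli_count:
  fixes q :: "'a \<Rightarrow> real" and G :: "nat \<Rightarrow> real"
  assumes fin: "finite I" and sub: "Sa \<subseteq> I" "Sb \<subseteq> I" and disj: "Sa \<inter> Sb = {}"
    and qa: "\<And>e. e \<in> Sa \<Longrightarrow> q e = pa" and qb: "\<And>e. e \<in> Sb \<Longrightarrow> q e = pb"
    and pa: "0 \<le> pa" "pa \<le> 1" and pb: "0 \<le> pb" "pb \<le> 1"
  shows "measure_pmf.expectation (Pi_pmf I False (\<lambda>e. bernoulli_pmf (q e)))
            (\<lambda>E. G (card {e \<in> Sa \<union> Sb. E e}))
       = measure_pmf.expectation (pair_pmf (binomial_pmf (card Sa) pa) (binomial_pmf (card Sb) pb))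
            (\<lambda>(x, y). G (x + y))"
proof -
  let ?Q = "\<lambda>e. bernoulli_pmf (q e)"
  let ?S = "Sa \<union> Sb"
  let ?F = "\<lambda>E. G (card {e \<in> ?S. E e})"
  have finS: "finite Sa" "finite Sb" using fin sub finite_subset by auto
  have merge: "?F (\<lambda>e. if e \<in> Sa then f e else g e) = G (card {e \<in> Sa. f e} + card {e \<in> Sb. g e})"
    for f g
  proof -
    have "{e \<in> ?S. if e \<in> Sa then f e else g e} = {e \<in> Sa. f e} \<union> {e \<in> Sb. g e}"
      using disj by auto
    thus ?thesis using finS disj by (simp add: card_Un_disjoint disjoint_iff)
  qed
  have restrict: "?F (\<lambda>x. if x \<in> ?S then f x else False) = ?F f" for f
    by (rule arg_cong[where f = "\<lambda>A. G (card A)"]) auto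
  have "Pi_pmf ?S False ?Q = map_pmf (\<lambda>f x. if x \<in> ?S then f x else False) (Pi_pmf I False ?Q)"
    by (rule Pi_pmf_subset) (use fin sub in auto)
  hence "measure_pmf.expectation (Pi_pmf I False ?Q) ?F = measure_pmf.expectation (Pi_pmf ?S False ?Q) ?F"
    by (simp only: integral_map_pmf restrict)
  also have "Pi_pmf ?S False ?Q = map_pmf (\<lambda>(f, g) x. if x \<in> Sa then f x else g x)
             (pair_pmf (Pi_pmf Sa False ?Q) (Pi_pmf Sb False ?Q))"
    using Pi_pmf_union[OF finS disj] .
  also have "Pi_pmf Sa False ?Q = Pi_pmf Sa False (\<lambda>_. bernoulli_pmf pa)"
    by (rule Pi_pmf_cong) (use qa in auto)
  also have "Pi_pmf Sb False ?Q = Pi_pmf Sb False (\<lambda>_. bernoulli_pmf pb)"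
    by (rule Pi_pmf_cong) (use qb in auto)
  also have "measure_pmf.expectation (map_pmf (\<lambda>(f, g) x. if x \<in> Sa then f x else g x)
               (pair_pmf (Pi_pmf Sa False (\<lambda>_. bernoulli_pmf pa)) (Pi_pmf Sb False (\<lambda>_. bernoulli_pmf pb)))) ?F
      = measure_pmf.expectation (map_pmf (\<lambda>(f, g). (card {e \<in> Sa. f e}, card {e \<in> Sb. g e}))
               (pair_pmf (Pi_pmf Sa False (\<lambda>_. bernoulli_pmf pa)) (Pi_pmf Sb False (\<lambda>_. bernoulli_pmf pb))))
          (\<lambda>(x, y). G (x + y))"
    by (simp only: integral_map_pmf case_prod_unfold merge fst_conv snd_conv)
  also have "map_pmf (\<lambda>(f, g). (card {e \<in> Sa. f e}, card {e \<in> Sb. g e}))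
               (pair_pmf (Pi_pmf Sa False (\<lambda>_. bernoulli_pmf pa)) (Pi_pmf Sb False (\<lambda>_. bernoulli_pmf pb)))
      = pair_pmf (binomial_pmf (card Sa) pa) (binomial_pmf (card Sb) pb)"
    using binomial_pmf_altdef'[OF finS(1) refl, of pa False]
      binomial_pmf_altdef'[OF finS(2) refl, of pb False] pa pb
    by (simp add: map_pair)
  finally show ?thesis .
qed

definition expect_binomial_sum :: "real \<Rightarrow> real \<Rightarrow> (nat \<Rightarrow> real) \<Rightarrow> nat \<Rightarrow> nat \<Rightarrow> real" where
  "expect_binomial_sum p q G m n =
     measure_pmf.expectation (pair_pmf (binomial_pmf m p) (binomial_pmf n q)) (\<lambda>(x, y). G (x + y))"

lemma expect_binomial_sum_eq_sum:
  assumes "0 \<le> p" "p \<le> 1" "0 \<le> q" "q \<le> 1"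
  shows "expect_binomial_sum p q G m n =
    (\<Sum>x\<le>m. \<Sum>y\<le>n. pmf (binomial_pmf m p) x * pmf (binomial_pmf n q) y * G (x + y))"
proof -
  have "expect_binomial_sum p q G m n = (\<Sum>z\<in>{..m} \<times> {..n}. (case z of (x, y) \<Rightarrow> G (x + y)) *
           pmf (pair_pmf (binomial_pmf m p) (binomial_pmf n q)) z)"
    unfolding expect_binomial_sum_def
    by (rule integral_measure_pmf_real) (use assms in \<open>auto simp: set_pmf_binomial_eq split: if_splits\<close>)
  also have "\<dots> = (\<Sum>x\<le>m. \<Sum>y\<le>n. pmf (binomial_pmf m p) x * pmf (binomial_pmf n q) y * G (x + y))"
    unfolding sum.cartesian_product by (intro sum.cong refl) (auto simp: pmf_pair)
  finally show ?thesis .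
qed

definition edge_key :: "nat \<Rightarrow> nat \<Rightarrow> nat \<times> nat" where
  "edge_key j a = (min a j, max a j)"

lemma inj_edge_key: "inj (edge_key j)"
  by (rule injI) (auto simp: edge_key_def min_def max_def split: if_splits)

lemma gip_step_from_seeds:
  assumes fin: "finite A0" and sub: "A0 \<subseteq> {..<N}"
  shows "gip N (\<lambda>i j. \<alpha> * adj E i j) l h (\<lambda>i. if i \<in> A0 then l0 else 0) 1 j
       = gip_f (l j 1) (h j 1) (\<alpha> * l0 * real (card {e \<in> edge_key j ` A0. E e}))"
proof -
  have "(\<Sum>i<N. \<alpha> * adj E i j * (if i \<in> A0 then l0 else 0)) = (\<Sum>i\<in>A0. \<alpha> * adj E i j * l0)"
    by (rule sum.mono_neutral_cong_right) (use sub in auto)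
  also have "\<dots> = \<alpha> * l0 * (\<Sum>i\<in>A0. if E (edge_key j i) then 1 else 0)"
    by (simp add: sum_distrib_left adj_def edge_key_def mult_ac)
  also have "(\<Sum>i\<in>A0. if E (edge_key j i) then 1 else 0) = real (card {i \<in> A0. E (edge_key j i)})"
    using sum.inter_filter[OF fin, of "\<lambda>_. 1::real" "\<lambda>i. E (edge_key j i)"] by simp
  also have "card {i \<in> A0. E (edge_key j i)} = card (edge_key j ` {i \<in> A0. E (edge_key j i)})"
    by (simp add: card_image inj_on_subset[OF inj_edge_key])
  also have "edge_key j ` {i \<in> A0. E (edge_key j i)} = {e \<in> edge_key j ` A0. E e}" by auto
  finally show ?thesis unfolding One_nat_def gip.simps by simp
qed

lemma finite_set_sbm: "finite (set_pmf (sbm nb pin pout))"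
proof -
  have "finite {(i, j). i \<le> j \<and> j < 2 * nb}"
    by (rule finite_subset[of _ "{..<2*nb} \<times> {..<2*nb}"]) auto
  thus ?thesis unfolding sbm_def
    by (intro finite_subset[OF set_Pi_pmf_subset']) (auto intro!: finite_PiE_dflt)
qed

lemma expectation_sbm_seed_neighbours:
  assumes fin: "finite A0" and sub: "A0 \<subseteq> {..<2*nb}" and j: "j < 2*nb"
    and p: "0 \<le> pin" "pin \<le> 1" "0 \<le> pout" "pout \<le> 1"
  shows "measure_pmf.expectation (sbm nb pin pout) (\<lambda>E. G (card {e \<in> edge_key j ` A0. E e}))
     = expect_binomial_sum pin pout G
         (card {a \<in> A0. same_block nb a j}) (card {a \<in> A0. \<not> same_block nb a j})"
proof -
  let ?I = "{(i, j). i \<le> j \<and> j < 2 * nb}"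
  define q where "q e = (if same_block nb (fst e) (snd e) then pin else pout)" for e :: "nat \<times> nat"
  define Sa where "Sa = edge_key j ` {a \<in> A0. same_block nb a j}"
  define Sb where "Sb = edge_key j ` {a \<in> A0. \<not> same_block nb a j}"
  have sbm: "sbm nb pin pout = Pi_pmf ?I False (\<lambda>e. bernoulli_pmf (q e))"
    unfolding sbm_def q_def by (intro Pi_pmf_cong) (auto split: prod.splits)
  have finI: "finite ?I"
    by (rule finite_subset[of _ "{..<2*nb} \<times> {..<2*nb}"]) auto
  have q_edge_key: "q (edge_key j a) = (if same_block nb a j then pin else pout)" for a
    by (auto simp: q_def edge_key_def same_block_def min_def max_def)
  have "edge_key j ` A0 = Sa \<union> Sb" unfolding Sa_def Sb_def by auto
  moreover have "card Sa = card {a \<in> A0. same_block nb a j}"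
    and "card Sb = card {a \<in> A0. \<not> same_block nb a j}"
    unfolding Sa_def Sb_def by (simp_all add: card_image inj_on_subset[OF inj_edge_key])
  moreover have "measure_pmf.expectation (Pi_pmf ?I False (\<lambda>e. bernoulli_pmf (q e)))
      (\<lambda>E. G (card {e \<in> Sa \<union> Sb. E e})) = expect_binomial_sum pin pout G (card Sa) (card Sb)"
    unfolding expect_binomial_sum_def
  proof (rule expectation_Pi_bernoulli_count[OF finI])
    show "Sa \<subseteq> ?I" "Sb \<subseteq> ?I" using sub j unfolding Sa_def Sb_def by (auto simp: edge_key_def)
    show "Sa \<inter> Sb = {}" unfolding Sa_def Sb_def using inj_edge_key[of j] by (auto dest: injD)
  qed (use p q_edge_key in \<open>auto simp: Sa_def Sb_def\<close>)
  ultimately show ?thesis unfolding sbm by simp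
qed

definition cap_gain :: "nat \<Rightarrow> real" where
  "cap_gain k = real (min k 4 - min k 2)"

lemma gip_f_cap_gain:
  assumes "c > 0"
  shows "gip_f (2 * c) (4 * c) (c * real k) - gip_f (2 * c) (2 * c) (c * real k) = c * cap_gain k"
  using assms by (auto simp: gip_f_def cap_gain_def min_def of_nat_diff algebra_simps)

lemma gip_delta_eq_sum_expect_cap_gain:
  assumes fin: "finite A0" and sub: "A0 \<subseteq> {..<2*nb}" and "\<alpha> > 0" "l0 > 0"
    and p: "0 \<le> pin" "pin \<le> 1" "0 \<le> pout" "pout \<le> 1"
  shows "gip_delta nb pin pout \<alpha> l0 \<gamma> A0 = (1 - \<gamma>) * (\<alpha> * l0) *
     (\<Sum>j<2*nb. expect_binomial_sum pin pout cap_gain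
        (card {a \<in> A0. same_block nb a j}) (card {a \<in> A0. \<not> same_block nb a j}))"
proof -
  let ?M = "measure_pmf (sbm nb pin pout)"
  let ?k = "\<lambda>E j. card {e \<in> edge_key j ` A0. E e}"
  have int: "integrable ?M f" for f :: "_ \<Rightarrow> real"
    by (rule integrable_measure_pmf_finite[OF finite_set_sbm])
  have c: "\<alpha> * l0 > 0" using assms by simp
  have "gip_delta nb pin pout \<alpha> l0 \<gamma> A0
      = measure_pmf.expectation (sbm nb pin pout)
          (\<lambda>E. \<Sum>j<2*nb. (1 - \<gamma>) * (\<alpha> * l0) * cap_gain (?k E j))"
    unfolding gip_delta_def exp_activity_def gip_step_from_seeds[OF fin sub]
    by (subst Bochner_Integration.integral_diff[OF int int, symmetric])
       (simp add: sum_subtractf[symmetric] right_diff_distrib[symmetric] mult.assoc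
          gip_f_cap_gain[OF c, simplified mult.assoc])
  also have "\<dots> = (1 - \<gamma>) * (\<alpha> * l0) *
      (\<Sum>j<2*nb. measure_pmf.expectation (sbm nb pin pout) (\<lambda>E. cap_gain (?k E j)))"
    by (simp add: Bochner_Integration.integral_sum[OF int] sum_distrib_left)
  also have "\<dots> = (1 - \<gamma>) * (\<alpha> * l0) *
     (\<Sum>j<2*nb. expect_binomial_sum pin pout cap_gain
        (card {a \<in> A0. same_block nb a j}) (card {a \<in> A0. \<not> same_block nb a j}))"
    by (simp add: expectation_sbm_seed_neighbours[OF fin sub _ p])
  finally show ?thesis .
qed


lemma gip_delta_two_block_seeds:
  assumes Sa: "Sa \<subseteq> {..<nb}" and Sb: "Sb \<subseteq> {nb..<2*nb}" and "\<alpha> > 0" "l0 > 0"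
    and p: "0 \<le> pin" "pin \<le> 1" "0 \<le> pout" "pout \<le> 1"
  shows "gip_delta nb pin pout \<alpha> l0 \<gamma> (Sa \<union> Sb) = (1 - \<gamma>) * (\<alpha> * l0) * real nb *
     (expect_binomial_sum pin pout cap_gain (card Sa) (card Sb)
      + expect_binomial_sum pin pout cap_gain (card Sb) (card Sa))"
proof -
  let ?E = "expect_binomial_sum pin pout cap_gain"
  let ?f = "\<lambda>j. ?E (card {a \<in> Sa \<union> Sb. same_block nb a j}) (card {a \<in> Sa \<union> Sb. \<not> same_block nb a j})"
  have fin: "finite (Sa \<union> Sb)" using Sa Sb finite_subset by blast
  have "?f j = ?E (card Sa) (card Sb)" if "j < nb" for j
  proof -
    have "{a \<in> Sa \<union> Sb. same_block nb a j} = Sa" "{a \<in> Sa \<union> Sb. \<not> same_block nb a j} = Sb"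
      using Sa Sb that by (auto simp: same_block_def)
    thus ?thesis by simp
  qed
  hence "(\<Sum>j<nb. ?f j) = real nb * ?E (card Sa) (card Sb)" by simp
  moreover have "?f j = ?E (card Sb) (card Sa)" if "j \<in> {nb..<2*nb}" for j
  proof -
    have "{a \<in> Sa \<union> Sb. same_block nb a j} = Sb" "{a \<in> Sa \<union> Sb. \<not> same_block nb a j} = Sa"
      using Sa Sb that by (auto simp: same_block_def)
    thus ?thesis by simp
  qed
  hence "(\<Sum>j\<in>{nb..<2*nb}. ?f j) = real nb * ?E (card Sb) (card Sa)" by simp
  moreover have "(\<Sum>j<2*nb. ?f j) = (\<Sum>j<nb. ?f j) + (\<Sum>j\<in>{nb..<2*nb}. ?f j)"
    by (simp add: lessThan_atLeast0 sum.atLeastLessThan_concat)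
  ultimately have "(\<Sum>j<2*nb. ?f j) = real nb * (?E (card Sa) (card Sb) + ?E (card Sb) (card Sa))"
    by (simp add: algebra_simps)
  moreover have "Sa \<union> Sb \<subseteq> {..<2*nb}" using Sa Sb by auto
  ultimately show ?thesis
    using gip_delta_eq_sum_expect_cap_gain[OF fin _ assms(3-)] by simp
qed

lemma expect_cap_gain_concentrated_gt_split:
  assumes "0 \<le> p" "p \<le> 1" "0 \<le> q" "q \<le> 1" and "p \<noteq> q" "0 < p + q" "p + q < 2"
  shows "expect_binomial_sum p q cap_gain 4 0 + expect_binomial_sum p q cap_gain 0 4
       > 2 * expect_binomial_sum p q cap_gain 2 2"
proof -
  have "expect_binomial_sum p q cap_gain 4 0 + expect_binomial_sum p q cap_gain 0 4
        - 2 * expect_binomial_sum p q cap_gain 2 2 = 2 * (p - q)^2 * (p + q) * (2 - (p + q))"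
    using assms(1-4)
    by (simp add: expect_binomial_sum_eq_sum eval_nat_numeral cap_gain_def algebra_simps)
  moreover have "2 * (p - q)^2 * (p + q) * (2 - (p + q)) > 0"
    using assms(5-7) by (intro mult_pos_pos) auto
  ultimately show ?thesis by linarith
qed


theorem claim3:
  fixes nb :: nat and \<alpha> l0 \<gamma> pin pout :: real
    and i1 i2 i3 i4 j1 j2 j3 j4 :: nat
  assumes "nb \<ge> 1" and "\<alpha> > 0" and "l0 > 0" and "0 \<le> \<gamma>" and "\<gamma> < 1"
    and "0 \<le> pin" and "pin \<le> 1" and "0 \<le> pout" and "pout \<le> 1"
    and "(pin > pout \<and> 1 - pin > pout) \<or> (pout > pin \<and> 1 - pout > pin)"
    and "distinct [i1, i2, i3, i4]" and "{i1, i2, i3, i4} \<subseteq> {0..<nb}"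
    and "distinct [j1, j2, j3, j4]" and "{j1, j2} \<subseteq> {0..<nb}"
    and "{j3, j4} \<subseteq> {nb..<2 * nb}"
  shows "gip_delta nb pin pout \<alpha> l0 \<gamma> {i1, i2, i3, i4}
         > gip_delta nb pin pout \<alpha> l0 \<gamma> {j1, j2, j3, j4}"
proof -
  note p = assms(6-9)
  let ?E = "expect_binomial_sum pin pout cap_gain"
  define scale where "scale = (1 - \<gamma>) * (\<alpha> * l0) * real nb"
  have "scale > 0" using assms(1-3,5) by (simp add: scale_def)
  have "card {i1, i2, i3, i4} = 4" "card {j1, j2} = 2" "card {j3, j4} = 2"
    using assms(11,13) by simp_all
  moreover have "gip_delta nb pin pout \<alpha> l0 \<gamma> ({i1, i2, i3, i4} \<union> {})
      = scale * (?E (card {i1, i2, i3, i4}) (card ({} :: nat set))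
                 + ?E (card ({} :: nat set)) (card {i1, i2, i3, i4}))"
    unfolding scale_def by (rule gip_delta_two_block_seeds) (use assms(2,3,12) p in auto)
  moreover have "gip_delta nb pin pout \<alpha> l0 \<gamma> ({j1, j2} \<union> {j3, j4})
      = scale * (?E (card {j1, j2}) (card {j3, j4}) + ?E (card {j3, j4}) (card {j1, j2}))"
    unfolding scale_def by (rule gip_delta_two_block_seeds) (use assms(2,3,14,15) p in auto)
  ultimately have "gip_delta nb pin pout \<alpha> l0 \<gamma> {i1, i2, i3, i4} = scale * (?E 4 0 + ?E 0 4)"
    and "gip_delta nb pin pout \<alpha> l0 \<gamma> {j1, j2, j3, j4} = scale * (2 * ?E 2 2)"
    by (simp_all add: insert_commute)
  moreover have "?E 4 0 + ?E 0 4 > 2 * ?E 2 2"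
    by (rule expect_cap_gain_concentrated_gt_split) (use p assms(10) in auto)
  ultimately show ?thesis
    using \<open>scale > 0\<close> by simp
qed

end
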